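(* Assume (i) $b,f,g$ are bounded and uniformly continuous in all variables, and (ii) $\mathbb H(\theta)\neq\emptyset$ for all $\theta\in\mathbb X$ and $\theta\mapsto\mathbb H(\theta)$ is continuous with respect to the Hausdorff distance $d$. Then for any $\eta\in\mathbb L^2(\mathbb F;\mathbb R^N)$, $Z\in\mathbb L^2(\mathbb F;\mathbb R^{dN})$ and $\varepsilon>0$, there exist $\alpha^\varepsilon\in\mathcal A$ and $Z^\varepsilon\in\mathbb L^2(\mathbb F;\mathbb R^{dN})$ such that $\alpha^\varepsilon_t\in\mathcal E_\varepsilon(t,X_t,Z^\varepsilon_t)$ (for all $t,\omega$), $\mathbb E[\int_0^T|Z^\varepsilon_t-Z_t|^2dt]\le\varepsilon$, and, with $\Theta_t:=(t,X_t,Z_t)$, $$\mathbb E\Big[\int_0^T\Big|\,|\eta_t-h(\Theta_t,\alpha^\varepsilon_t)|-d\big(\eta_t,\mathbb H(\Theta_t)\big)\Big|^2dt\Big]\le\varepsilon.$$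
   Context: Fix integers $d,N\ge 1$ and $T>0$. Let $(\Omega,\mathcal F,\mathbb P)$ carry a standard $d$-dimensional Brownian motion $B$, $\mathbb F=\mathbb F^B$, and $X:=B$. For $i=1,\dots,N$, $A_i$ is a domain in some Euclidean space, $A:=A_1\times\cdots\times A_N$, $\mathcal A_i$ is the set of $\mathbb F$-progressively measurable $A_i$-valued processes, $\mathcal A:=\mathcal A_1\times\cdots\times\mathcal A_N$; $(a^{-i},\tilde a_i)$ denotes $a$ with $i$-th component replaced by $\tilde a_i$. Data: $b:[0,T]\times\mathbb R^d\times A\to\mathbb R^d$, $f:[0,T]\times\mathbb R^d\times A\to\mathbb R^N$, $g:\mathbb R^d\to\mathbb R^N$. Let $\mathbb X:=[0,T]\times\mathbb R^d\times\mathbb R^{dN}$, $\theta=(t,x,z)$, $z=(z^1,\dots,z^N)$, $z^i\in\mathbb R^d$, $\theta^i:=(t,x,z^i)$; $h_i(t,x,z^i,a):=f_i(t,x,a)+b(t,x,a)\cdot z^i$, $h(\theta,a):=(h_1(\theta^1,a),\dots,h_N(\theta^N,a))$. For $\varepsilon>0$, $\mathcal E_\varepsilon(\theta)$ is the set of $a\in A$ with $h_i(\theta^i,a)\ge h_i(\theta^i,(a^{-i},\tilde a_i))-\varepsilon$ for all $i$, $\tilde a_i\in A_i$; $\mathbb H_\varepsilon(\theta):=\{y\in\mathbb R^N:|y-h(\theta,a)|<\varepsilon$ for some $a\in\mathcal E_\varepsilon(\theta)\}$, $\mathbb H(\theta):=\bigcap_{\varepsilon>0}\mathbb H_\varepsilon(\theta)$.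 Hausdorff distance: $d(\mathbb H_1,\mathbb H_2)=[\sup_{y_1\in\mathbb H_1}d(y_1,\mathbb H_2)]\vee[\sup_{y_2\in\mathbb H_2}d(y_2,\mathbb H_1)]$, $d(y,\mathbb H'):=\inf_{y'\in\mathbb H'}|y-y'|$. $\mathbb L^2(\mathbb F;\mathbb R^m)$ denotes $\mathbb F$-progressively measurable $\mathbb R^m$-valued processes $\xi$ with $\mathbb E\int_0^T|\xi_t|^2dt<\infty$. *)

theory Defs
  imports "HOL-Analysis.Analysis" "HOL-Probability.Probability"
begin

text \<open>R^m is represented as the subspace of nat => real (product topology) of sequences
  vanishing from index m on; on it the product topology is the Euclidean one.\<close>

definition Rspace :: "nat \<Rightarrow> (nat \<Rightarrow> real) set" where
  "Rspace m = {v. \<forall>j\<ge>m. v j = 0}"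

definition is_domain_in :: "nat \<Rightarrow> (nat \<Rightarrow> real) set \<Rightarrow> bool" where
  "is_domain_in m D \<longleftrightarrow> D \<subseteq> Rspace m \<and> openin (top_of_set (Rspace m)) D
      \<and> connected D \<and> D \<noteq> {}"

definition profiles :: "('n \<Rightarrow> (nat \<Rightarrow> real) set) \<Rightarrow> ('n \<Rightarrow> nat \<Rightarrow> real) set" where
  "profiles A = {a. \<forall>i. a i \<in> A i}"

definition hh :: "(real \<Rightarrow> real^'d \<Rightarrow> ('n \<Rightarrow> nat \<Rightarrow> real) \<Rightarrow> real^'d)
    \<Rightarrow> (real \<Rightarrow> real^'d \<Rightarrow> ('n \<Rightarrow> nat \<Rightarrow> real) \<Rightarrow> real^'n)
    \<Rightarrow> 'n \<Rightarrow> real \<Rightarrow> real^'d \<Rightarrow> real^'d \<Rightarrow> ('n \<Rightarrow> nat \<Rightarrow> real) \<Rightarrow> real" where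
  "hh b f i t x zi a = f t x a $ i + b t x a \<bullet> zi"

definition hvec :: "(real \<Rightarrow> real^'d \<Rightarrow> ('n::finite \<Rightarrow> nat \<Rightarrow> real) \<Rightarrow> real^'d)
    \<Rightarrow> (real \<Rightarrow> real^'d \<Rightarrow> ('n \<Rightarrow> nat \<Rightarrow> real) \<Rightarrow> real^'n)
    \<Rightarrow> real \<times> (real^'d) \<times> (real^'d^'n) \<Rightarrow> ('n \<Rightarrow> nat \<Rightarrow> real) \<Rightarrow> real^'n" where
  "hvec b f \<theta> a = (\<chi> i. hh b f i (fst \<theta>) (fst (snd \<theta>)) (snd (snd \<theta>) $ i) a)"

definition NashEps :: "('n \<Rightarrow> (nat \<Rightarrow> real) set)
    \<Rightarrow> (real \<Rightarrow> real^'d \<Rightarrow> ('n::finite \<Rightarrow> nat \<Rightarrow> real) \<Rightarrow> real^'d)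
    \<Rightarrow> (real \<Rightarrow> real^'d \<Rightarrow> ('n \<Rightarrow> nat \<Rightarrow> real) \<Rightarrow> real^'n)
    \<Rightarrow> real \<Rightarrow> real \<times> (real^'d) \<times> (real^'d^'n) \<Rightarrow> ('n \<Rightarrow> nat \<Rightarrow> real) set" where
  "NashEps A b f \<epsilon> \<theta> = {a \<in> profiles A. \<forall>i. \<forall>ai \<in> A i.
      hh b f i (fst \<theta>) (fst (snd \<theta>)) (snd (snd \<theta>) $ i) a
        \<ge> hh b f i (fst \<theta>) (fst (snd \<theta>)) (snd (snd \<theta>) $ i) (a(i := ai)) - \<epsilon>}"

definition HHeps :: "('n \<Rightarrow> (nat \<Rightarrow> real) set)
    \<Rightarrow> (real \<Rightarrow> real^'d \<Rightarrow> ('n::finite \<Rightarrow> nat \<Rightarrow> real) \<Rightarrow> real^'d)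
    \<Rightarrow> (real \<Rightarrow> real^'d \<Rightarrow> ('n \<Rightarrow> nat \<Rightarrow> real) \<Rightarrow> real^'n)
    \<Rightarrow> real \<Rightarrow> real \<times> (real^'d) \<times> (real^'d^'n) \<Rightarrow> (real^'n) set" where
  "HHeps A b f \<epsilon> \<theta> = {y. \<exists>a \<in> NashEps A b f \<epsilon> \<theta>. norm (y - hvec b f \<theta> a) < \<epsilon>}"

definition HH :: "('n \<Rightarrow> (nat \<Rightarrow> real) set)
    \<Rightarrow> (real \<Rightarrow> real^'d \<Rightarrow> ('n::finite \<Rightarrow> nat \<Rightarrow> real) \<Rightarrow> real^'d)
    \<Rightarrow> (real \<Rightarrow> real^'d \<Rightarrow> ('n \<Rightarrow> nat \<Rightarrow> real) \<Rightarrow> real^'n)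
    \<Rightarrow> real \<times> (real^'d) \<times> (real^'d^'n) \<Rightarrow> (real^'n) set" where
  "HH A b f \<theta> = (\<Inter>\<epsilon>\<in>{0<..}. HHeps A b f \<epsilon> \<theta>)"

definition hausd :: "'a::metric_space set \<Rightarrow> 'a set \<Rightarrow> ereal" where
  "hausd H1 H2 = max (SUP y\<in>H1. ereal (infdist y H2)) (SUP y\<in>H2. ereal (infdist y H1))"

definition std_brownian :: "'w measure \<Rightarrow> real \<Rightarrow> (real \<Rightarrow> 'w \<Rightarrow> real^'d) \<Rightarrow> bool" where
  "std_brownian M T B \<longleftrightarrow>
     (\<forall>t\<in>{0..T}. B t \<in> borel_measurable M)
   \<and> (\<forall>\<omega>\<in>space M. B 0 \<omega> = 0 \<and> continuous_on {0..T} (\<lambda>t. B t \<omega>))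
   \<and> (\<forall>s t. 0 \<le> s \<and> s < t \<and> t \<le> T \<longrightarrow>
        prob_space.indep_vars M (\<lambda>_. borel) (\<lambda>j \<omega>. (B t \<omega> - B s \<omega>) $ j) UNIV
      \<and> (\<forall>j. distributed M lborel (\<lambda>\<omega>. (B t \<omega> - B s \<omega>) $ j) (normal_density 0 (sqrt (t - s)))))
   \<and> (\<forall>(n::nat) (u::nat \<Rightarrow> real). 0 \<le> u 0 \<and> (\<forall>k<n. u k < u (Suc k)) \<and> u n \<le> T \<longrightarrow>
        prob_space.indep_vars M (\<lambda>_. borel) (\<lambda>k \<omega>. B (u (Suc k)) \<omega> - B (u k) \<omega>) {..<n})"

definition natfilt :: "'w measure \<Rightarrow> real \<Rightarrow> (real \<Rightarrow> 'w \<Rightarrow> real^'d) \<Rightarrow> real \<Rightarrow> 'w measure" where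
  "natfilt M T B t = sigma (space M)
      (\<Union>s\<in>{0..min t T}. {B s -` U \<inter> space M | U. U \<in> sets borel})"

definition progressive :: "(real \<Rightarrow> 'w measure) \<Rightarrow> real \<Rightarrow> (real \<Rightarrow> 'w \<Rightarrow> 'v::topological_space) \<Rightarrow> bool" where
  "progressive F T \<xi> \<longleftrightarrow> (\<forall>t\<in>{0..T}.
      (\<lambda>(s, \<omega>). \<xi> s \<omega>) \<in> borel_measurable (restrict_space lborel {0..t} \<Otimes>\<^sub>M F t))"

definition L2proc :: "'w measure \<Rightarrow> (real \<Rightarrow> 'w measure) \<Rightarrow> real \<Rightarrow> (real \<Rightarrow> 'w \<Rightarrow> 'v::real_normed_vector) \<Rightarrow> bool" where
  "L2proc M F T \<xi> \<longleftrightarrow> progressive F T \<xi> \<and>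
     (\<integral>\<^sup>+\<omega>. (\<integral>\<^sup>+t\<in>{0..T}. ennreal ((norm (\<xi> t \<omega>))\<^sup>2) \<partial>lborel) \<partial>M) < \<infinity>"

end

(*
  Around a point (theta0, y0) pick one kappa-Nash profile a whose payoff h(theta0, a) lies within
  2 kappa of the distance from y0 to H(theta0); it exists because H(theta0) is contained in
  H_kappa(theta0). Since h is equicontinuous in theta uniformly in the action, and H is Hausdorff
  continuous, the same a stays a 3 kappa-Nash profile with nearly closest payoff on a whole ball
  around (theta0, y0). Lindelof reduces these balls to a countable cover, which yields a Borel
  selector phi(theta, y); then alpha_t = phi(t, X_t, Z_t, eta_t) is progressive and its pointwise
  error sqrt(epsilon / T) integrates to epsilon. No perturbation of Z is needed: Z^epsilon = Z.
*)

theory Submission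
  imports Defs
begin

lemma space_natfilt [simp]: "space (natfilt M T B t) = space M"
  by (simp add: natfilt_def space_measure_of_conv)

lemma natfilt_measurable:
  fixes B :: "real \<Rightarrow> 'w \<Rightarrow> real^'d"
  assumes "u \<in> {0..min t T}"
  shows "B u \<in> borel_measurable (natfilt M T B t)"
proof -
  let ?G = "\<Union>s\<in>{0..min t T}. {B s -` U \<inter> space M | U. U \<in> sets borel}"
  have "sets (natfilt M T B t) = sigma_sets (space M) ?G"
    unfolding natfilt_def by (rule sets_measure_of) auto
  moreover have "B u -` U \<inter> space M \<in> ?G" if "U \<in> sets borel" for U
    using assms that by blast
  ultimately show ?thesis
    by (auto simp: measurable_def)
qed

lemma tendsto_dyadic_ceiling: "(\<lambda>n::nat. real_of_int \<lceil>s * 2^n\<rceil> / 2^n) \<longlonglongrightarrow> s"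
proof (rule real_tendsto_sandwich[where f="\<lambda>_. s" and h="\<lambda>n. s + 1/2^n"])
  show "\<forall>\<^sub>F n in sequentially. s \<le> real_of_int \<lceil>s * 2^n\<rceil> / 2^n"
    by (intro always_eventually allI) (simp add: field_simps)
  have "\<lceil>s * 2^n\<rceil> \<le> s * 2^n + 1" for n :: nat
    by linarith
  then show "\<forall>\<^sub>F n in sequentially. real_of_int \<lceil>s * 2^n\<rceil> / 2^n \<le> s + 1/2^n"
    by (intro always_eventually allI) (simp add: field_simps)
  show "(\<lambda>n. s + 1/2^n) \<longlonglongrightarrow> s"
    using tendsto_add[OF tendsto_const LIMSEQ_divide_realpow_zero[of 2 1]] by simp
qed simp

lemma measurable_fst_restrict_pair:
  "fst \<in> borel_measurable (restrict_space lborel (S :: real set) \<Otimes>\<^sub>M N)"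
  by (rule measurable_compose[OF measurable_fst]) (simp add: measurable_restrict_space1)

text \<open>The process sampled at the dyadic times \<open>\<lceil>2^n s\<rceil>/2^n\<close> (clamped to \<open>[0,t]\<close>) takes
  countably many \<open>F_t\<close>-measurable values on Borel pieces of time, and converges to \<open>B\<close> by path
  continuity.\<close>

lemma progressive_natfilt_if_continuous:
  fixes B :: "real \<Rightarrow> 'w \<Rightarrow> real^'d"
  assumes cont: "\<And>\<omega>. \<omega> \<in> space M \<Longrightarrow> continuous_on {0..T} (\<lambda>t. B t \<omega>)"
  shows "progressive (natfilt M T B) T B"
  unfolding progressive_def
proof
  fix t assume t: "t \<in> {0..T}"
  let ?P = "restrict_space lborel {0..t} \<Otimes>\<^sub>M natfilt M T B t"
  define q where "q n s = min t (max 0 (real_of_int \<lceil>s * 2^n\<rceil> / 2^n))" for n :: nat and s :: real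
  have sampled: "(\<lambda>x. B (q n (fst x)) (snd x)) \<in> borel_measurable ?P" for n
  proof -
    have "B (min t (max 0 (real_of_int i / 2^n))) \<in> borel_measurable (natfilt M T B t)" for i :: int
      using t by (intro natfilt_measurable) auto
    then have "(\<lambda>x. B (min t (max 0 (real_of_int i / 2^n))) (snd x)) \<in> borel_measurable ?P" for i :: int
      by measurable
    moreover have "(\<lambda>x. \<lceil>fst x * 2^n\<rceil>) \<in> measurable ?P (count_space UNIV)"
      using measurable_fst_restrict_pair by measurable
    ultimately show ?thesis
      unfolding q_def by (rule measurable_compose_countable'[where I=UNIV]) auto
  qed
  show "(\<lambda>(s, \<omega>). B s \<omega>) \<in> borel_measurable ?P"
  proof (rule borel_measurable_LIMSEQ_metric[OF sampled])
    fix x assume "x \<in> space ?P"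
    then obtain s \<omega> where x: "x = (s, \<omega>)" and s: "s \<in> {0..t}" and \<omega>: "\<omega> \<in> space M"
      by (auto simp: space_pair_measure)
    have "(\<lambda>n. q n s) \<longlonglongrightarrow> min t (max 0 s)"
      unfolding q_def by (intro tendsto_min tendsto_max tendsto_const tendsto_dyadic_ceiling)
    then have "(\<lambda>n. q n s) \<longlonglongrightarrow> s"
      using s by simp
    moreover have "q n s \<in> {0..T}" for n
      using t by (auto simp: q_def)
    ultimately have "(\<lambda>n. B (q n s) \<omega>) \<longlonglongrightarrow> B s \<omega>"
      using s t by (intro continuous_on_tendsto_compose[OF cont[OF \<omega>]]) auto
    then show "(\<lambda>n. B (q n (fst x)) (snd x)) \<longlonglongrightarrow> (case x of (s, \<omega>) \<Rightarrow> B s \<omega>)"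
      by (simp add: x)
  qed
qed

lemma progressive_time: "progressive F T (\<lambda>t \<omega>. t)"
  unfolding progressive_def by (simp add: case_prod_beta' measurable_fst_restrict_pair)

lemma progressive_Pair:
  fixes X :: "real \<Rightarrow> 'w \<Rightarrow> 'a::second_countable_topology"
    and Y :: "real \<Rightarrow> 'w \<Rightarrow> 'b::second_countable_topology"
  assumes "progressive F T X" "progressive F T Y"
  shows "progressive F T (\<lambda>t \<omega>. (X t \<omega>, Y t \<omega>))"
  using assms unfolding progressive_def
  by (auto intro: borel_measurable_Pair[where f="\<lambda>(s, \<omega>). X s \<omega>" and g="\<lambda>(s, \<omega>). Y s \<omega>", simplified case_prod_beta'] simp: case_prod_beta')

lemma progressive_borel_compose:
  assumes "progressive F T X" "\<phi> \<in> borel_measurable borel"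
  shows "progressive F T (\<lambda>t \<omega>. \<phi> (X t \<omega>))"
  using assms unfolding progressive_def
  by (auto dest: measurable_compose simp: case_prod_beta')

text \<open>Lindelof leaves countably many of the balls; at each point take the value of the first
  ball that contains it.\<close>

lemma borel_measurable_local_choice:
  fixes P :: "'p::{metric_space, second_countable_topology} set"
    and good :: "'p \<Rightarrow> 'a::topological_space \<Rightarrow> bool"
  assumes local: "\<And>p0. p0 \<in> P \<Longrightarrow> \<exists>r>0. \<exists>a. \<forall>p\<in>P. dist p p0 < r \<longrightarrow> good p a"
  shows "\<exists>\<phi>\<in>borel_measurable borel. \<forall>p\<in>P. good p (\<phi> p)"
proof (cases "P = {}")
  case True
  then show ?thesis
    by (auto intro!: exI[of _ "\<lambda>_. undefined"] measurable_const)
next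
  case False
  define \<F> where "\<F> = {ball p0 r | p0 r. \<exists>a. \<forall>p\<in>P. dist p p0 < r \<longrightarrow> good p a}"
  have open_\<F>: "open S" if "S \<in> \<F>" for S
    using that by (auto simp: \<F>_def)
  obtain \<F>' where \<F>': "\<F>' \<subseteq> \<F>" "countable \<F>'" "\<Union>\<F>' = \<Union>\<F>"
    using Lindelof[OF open_\<F>] by blast
  have P_cover: "P \<subseteq> \<Union>\<F>"
  proof
    fix p0 assume "p0 \<in> P"
    with local obtain r a where "r > 0" "\<forall>p\<in>P. dist p p0 < r \<longrightarrow> good p a"
      by blast
    then show "p0 \<in> \<Union>\<F>"
      unfolding \<F>_def by (intro UnionI[of "ball p0 r"]) auto
  qed
  define U where "U k = from_nat_into \<F>' k" for k
  have "\<F>' \<noteq> {}"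
    using P_cover \<F>'(3) False by auto
  then have U: "U k \<in> \<F>" for k
    using from_nat_into \<F>'(1) unfolding U_def by blast
  have "\<exists>a. \<forall>p\<in>P. p \<in> U k \<longrightarrow> good p a" for k
    using U[of k] by (fastforce simp: \<F>_def dist_commute)
  then obtain c where c: "\<And>k p. p \<in> P \<Longrightarrow> p \<in> U k \<Longrightarrow> good p (c k)"
    by metis
  have "U k \<in> sets borel" for k
    using open_\<F>[OF U] by auto
  then have "(\<lambda>p. LEAST k. p \<in> U k) \<in> measurable borel (count_space UNIV)"
    by measurable
  then have "(\<lambda>p. c (LEAST k. p \<in> U k)) \<in> borel_measurable borel"
    by (rule measurable_compose[OF _ borel_measurable_count_space])
  moreover have "good p (c (LEAST k. p \<in> U k))" if p: "p \<in> P" for p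
  proof -
    obtain V where "V \<in> \<F>'" "p \<in> V"
      using p P_cover \<F>'(3) by blast
    then have "\<exists>k. p \<in> U k"
      using from_nat_into_surj[OF \<F>'(2)] unfolding U_def by metis
    then show ?thesis
      using c[OF p] by (rule LeastI2_ex)
  qed
  ultimately show ?thesis
    by (intro bexI[of _ "\<lambda>p. c (LEAST k. p \<in> U k)"]) auto
qed

definition uniformly_equicontinuous_in_state ::
    "real \<Rightarrow> ('n \<Rightarrow> (nat \<Rightarrow> real) set) \<Rightarrow> (real \<Rightarrow> 'x::metric_space \<Rightarrow> ('n \<Rightarrow> nat \<Rightarrow> real) \<Rightarrow> 'v::metric_space) \<Rightarrow> bool" where
  "uniformly_equicontinuous_in_state T A \<phi> \<longleftrightarrow>
     (\<forall>e>0. \<exists>\<delta>>0. \<forall>t\<in>{0..T}. \<forall>t'\<in>{0..T}. \<forall>x x'. \<forall>a\<in>profiles A.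
        \<bar>t - t'\<bar> < \<delta> \<and> dist x x' < \<delta> \<longrightarrow> dist (\<phi> t x a) (\<phi> t' x' a) < e)"

lemma uniformly_equicontinuous_in_stateI:
  assumes "\<forall>e>0. \<exists>\<delta>>0. \<forall>t\<in>{0..T}. \<forall>t'\<in>{0..T}. \<forall>x x'. \<forall>a\<in>profiles A. \<forall>a'\<in>profiles A.
        \<bar>t - t'\<bar> < \<delta> \<and> dist x x' < \<delta> \<and> (\<forall>i j. \<bar>a i j - a' i j\<bar> < \<delta>)
        \<longrightarrow> dist (\<phi> t x a) (\<phi> t' x' a') < e"
  shows "uniformly_equicontinuous_in_state T A \<phi>"
  unfolding uniformly_equicontinuous_in_state_def
proof (intro allI impI)
  fix e :: real assume "e > 0"
  with assms obtain \<delta> where "\<delta> > 0" and \<delta>: "\<forall>t\<in>{0..T}. \<forall>t'\<in>{0..T}. \<forall>x x'. \<forall>a\<in>profiles A. \<forall>a'\<in>profiles A.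
        \<bar>t - t'\<bar> < \<delta> \<and> dist x x' < \<delta> \<and> (\<forall>i j. \<bar>a i j - a' i j\<bar> < \<delta>)
        \<longrightarrow> dist (\<phi> t x a) (\<phi> t' x' a') < e"
    by auto
  then show "\<exists>\<delta>>0. \<forall>t\<in>{0..T}. \<forall>t'\<in>{0..T}. \<forall>x x'. \<forall>a\<in>profiles A.
        \<bar>t - t'\<bar> < \<delta> \<and> dist x x' < \<delta> \<longrightarrow> dist (\<phi> t x a) (\<phi> t' x' a) < e"
    by (intro exI[of _ \<delta>]) simp
qed

lemma uniformly_equicontinuous_in_stateD:
  assumes "uniformly_equicontinuous_in_state T A \<phi>" "e > 0"
  obtains \<delta> where "\<delta> > 0"
    "\<And>t t' x x' a. t \<in> {0..T} \<Longrightarrow> t' \<in> {0..T} \<Longrightarrow> a \<in> profiles A \<Longrightarrow>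
       \<bar>t - t'\<bar> < \<delta> \<Longrightarrow> dist x x' < \<delta> \<Longrightarrow> dist (\<phi> t x a) (\<phi> t' x' a) < e"
proof -
  from assms obtain \<delta> where "\<delta> > 0" and "\<forall>t\<in>{0..T}. \<forall>t'\<in>{0..T}. \<forall>x x'. \<forall>a\<in>profiles A.
        \<bar>t - t'\<bar> < \<delta> \<and> dist x x' < \<delta> \<longrightarrow> dist (\<phi> t x a) (\<phi> t' x' a) < e"
    unfolding uniformly_equicontinuous_in_state_def by auto
  then show ?thesis
    using that by simp
qed

lemma abs_inner_diff_le:
  fixes u v :: "'a::real_inner"
  shows "\<bar>u \<bullet> v - u0 \<bullet> v0\<bar> \<le> norm u * norm (v - v0) + norm (u - u0) * norm v0"
proof -
  have "\<bar>u \<bullet> v - u0 \<bullet> v0\<bar> = \<bar>u \<bullet> (v - v0) + (u - u0) \<bullet> v0\<bar>"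
    by (simp add: inner_diff_left inner_diff_right)
  also have "\<dots> \<le> \<bar>u \<bullet> (v - v0)\<bar> + \<bar>(u - u0) \<bullet> v0\<bar>"
    by (rule abs_triangle_ineq)
  also have "\<dots> \<le> norm u * norm (v - v0) + norm (u - u0) * norm v0"
    by (intro add_mono Cauchy_Schwarz_ineq2)
  finally show ?thesis .
qed

lemma dist_triple_lt:
  assumes "dist (t, x, z) (t0, x0, z0) < r"
  shows "dist t t0 < r" "dist x x0 < r" "dist z z0 < r"
  using assms dist_fst_le[of "(t, x, z)" "(t0, x0, z0)"] dist_snd_le[of "(t, x, z)" "(t0, x0, z0)"]
    dist_fst_le[of "(x, z)" "(x0, z0)"] dist_snd_le[of "(x, z)" "(x0, z0)"]
  by simp_all

lemma hh_equicontinuous_at: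
  fixes b :: "real \<Rightarrow> real^'d \<Rightarrow> ('n::finite \<Rightarrow> nat \<Rightarrow> real) \<Rightarrow> real^'d"
    and f :: "real \<Rightarrow> real^'d \<Rightarrow> ('n \<Rightarrow> nat \<Rightarrow> real) \<Rightarrow> real^'n"
    and z0 :: "real^'d^'n"
  assumes b_bdd: "\<exists>C. \<forall>t\<in>{0..T}. \<forall>x. \<forall>a\<in>profiles A. norm (b t x a) \<le> C"
    and b_eq: "uniformly_equicontinuous_in_state T A b"
    and f_eq: "uniformly_equicontinuous_in_state T A f"
    and t0: "t0 \<in> {0..T}" and \<kappa>: "\<kappa> > 0"
  shows "\<exists>r>0. \<forall>t x z. t \<in> {0..T} \<longrightarrow> dist (t, x, z) (t0, x0, z0) < r \<longrightarrow>
     (\<forall>a\<in>profiles A. \<forall>i. \<bar>hh b f i t x (z$i) a - hh b f i t0 x0 (z0$i) a\<bar> < \<kappa>)"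
proof -
  obtain C where C: "\<forall>t\<in>{0..T}. \<forall>x. \<forall>a\<in>profiles A. norm (b t x a) \<le> C"
    using b_bdd by blast
  define K where "K = \<bar>C\<bar> + 1"
  define N where "N = norm z0 + 1"
  have "K > 0" "N > 0"
    by (simp_all add: K_def N_def add_nonneg_pos)
  obtain r1 where "r1 > 0" and r1: "\<And>t t' x x' a. t \<in> {0..T} \<Longrightarrow> t' \<in> {0..T} \<Longrightarrow>
      a \<in> profiles A \<Longrightarrow> \<bar>t - t'\<bar> < r1 \<Longrightarrow> dist x x' < r1 \<Longrightarrow> dist (f t x a) (f t' x' a) < \<kappa>/2"
    using uniformly_equicontinuous_in_stateD[OF f_eq, of "\<kappa>/2"] \<kappa> by auto
  obtain r2 where "r2 > 0" and r2: "\<And>t t' x x' a. t \<in> {0..T} \<Longrightarrow> t' \<in> {0..T} \<Longrightarrow>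
      a \<in> profiles A \<Longrightarrow> \<bar>t - t'\<bar> < r2 \<Longrightarrow> dist x x' < r2 \<Longrightarrow> dist (b t x a) (b t' x' a) < \<kappa>/(4*N)"
    using uniformly_equicontinuous_in_stateD[OF b_eq, of "\<kappa>/(4*N)"] \<kappa> \<open>N > 0\<close> by auto
  define r where "r = min (min r1 r2) (\<kappa>/(4*K))"
  have "r > 0"
    using \<open>r1 > 0\<close> \<open>r2 > 0\<close> \<kappa> \<open>K > 0\<close> by (simp add: r_def)
  moreover have "\<bar>hh b f i t x (z$i) a - hh b f i t0 x0 (z0$i) a\<bar> < \<kappa>"
    if t: "t \<in> {0..T}" and close: "dist (t, x, z) (t0, x0, z0) < r" and a: "a \<in> profiles A"
    for t x z a i
  proof -
    note d = dist_triple_lt[OF close]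
    have t_close: "\<bar>t - t0\<bar> < r1" "\<bar>t - t0\<bar> < r2" and x_close: "dist x x0 < r1" "dist x x0 < r2"
      using d(1,2) by (simp_all add: r_def dist_real_def)
    have z_close: "norm (z$i - z0$i) \<le> \<kappa>/(4*K)"
      using d(3) Finite_Cartesian_Product.norm_nth_le[of "z - z0" i] by (simp add: r_def dist_norm)
    have "dist (f t x a) (f t0 x0 a) < \<kappa>/2"
      using r1[OF t t0 a t_close(1) x_close(1)] .
    then have f_close: "\<bar>f t x a $ i - f t0 x0 a $ i\<bar> < \<kappa>/2"
      using dist_vec_nth_le[of "f t x a" i "f t0 x0 a"] by (simp add: dist_real_def)
    have "dist (b t x a) (b t0 x0 a) < \<kappa>/(4*N)"
      using r2[OF t t0 a t_close(2) x_close(2)] .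
    then have b_close: "norm (b t x a - b t0 x0 a) \<le> \<kappa>/(4*N)"
      by (simp add: dist_norm)
    have "norm (b t x a) \<le> C"
      using C t a by blast
    then have "norm (b t x a) * norm (z$i - z0$i) \<le> K * (\<kappa>/(4*K))"
      using z_close by (intro mult_mono) (simp_all add: K_def)
    moreover have "norm (b t x a - b t0 x0 a) * norm (z0$i) \<le> (\<kappa>/(4*N)) * N"
      using b_close Finite_Cartesian_Product.norm_nth_le[of z0 i] \<kappa> by (intro mult_mono) (simp_all add: N_def)
    ultimately have "\<bar>b t x a \<bullet> z$i - b t0 x0 a \<bullet> z0$i\<bar> \<le> \<kappa>/2"
      using abs_inner_diff_le[of "b t x a" "z$i" "b t0 x0 a" "z0$i"] \<open>K > 0\<close> \<open>N > 0\<close>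
      by simp
    with f_close show ?thesis
      unfolding hh_def by linarith
  qed
  ultimately show ?thesis by blast
qed

lemma norm_hvec_diff_le:
  fixes b :: "real \<Rightarrow> real^'d \<Rightarrow> ('n::finite \<Rightarrow> nat \<Rightarrow> real) \<Rightarrow> real^'d"
  assumes "\<forall>i. \<bar>hh b f i t x (z$i) a - hh b f i t0 x0 (z0$i) a\<bar> < \<kappa>"
  shows "norm (hvec b f (t, x, z) a - hvec b f (t0, x0, z0) a) \<le> real CARD('n) * \<kappa>"
proof -
  have "norm (hvec b f (t, x, z) a - hvec b f (t0, x0, z0) a)
      \<le> (\<Sum>i\<in>UNIV. \<bar>(hvec b f (t, x, z) a - hvec b f (t0, x0, z0) a) $ i\<bar>)"
    by (rule norm_le_l1_cart)
  also have "\<dots> \<le> (\<Sum>i\<in>(UNIV::'n set). \<kappa>)"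
    using assms by (intro sum_mono) (auto simp: hvec_def less_imp_le)
  finally show ?thesis by simp
qed

lemma NashEps_perturb:
  assumes a: "a \<in> NashEps A b f \<kappa> (t0, x0, z0)"
    and close: "\<forall>a'\<in>profiles A. \<forall>i. \<bar>hh b f i t x (z$i) a' - hh b f i t0 x0 (z0$i) a'\<bar> < \<kappa>'"
    and "\<kappa> + 2 * \<kappa>' \<le> \<epsilon>"
  shows "a \<in> NashEps A b f \<epsilon> (t, x, z)"
proof -
  have "a \<in> profiles A"
    using a by (simp add: NashEps_def)
  moreover have "hh b f i t x (z$i) (a(i := ai)) - \<epsilon> \<le> hh b f i t x (z$i) a" if "ai \<in> A i" for i ai
  proof -
    have "a(i := ai) \<in> profiles A"
      using \<open>a \<in> profiles A\<close> that by (simp add: profiles_def)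
    then have "\<bar>hh b f i t x (z$i) (a(i := ai)) - hh b f i t0 x0 (z0$i) (a(i := ai))\<bar> < \<kappa>'"
      and "\<bar>hh b f i t x (z$i) a - hh b f i t0 x0 (z0$i) a\<bar> < \<kappa>'"
      using close \<open>a \<in> profiles A\<close> by blast+
    moreover have "hh b f i t0 x0 (z0$i) (a(i := ai)) - \<kappa> \<le> hh b f i t0 x0 (z0$i) a"
      using a that by (simp add: NashEps_def)
    ultimately show ?thesis
      using assms(3) by linarith
  qed
  ultimately show ?thesis
    by (simp add: NashEps_def)
qed

lemma infdist_lt_if_hausd_less:
  assumes "hausd H1 H2 < ereal e"
  shows "y \<in> H1 \<Longrightarrow> infdist y H2 < e" and "y \<in> H2 \<Longrightarrow> infdist y H1 < e"
proof -
  show "infdist y H2 < e" if "y \<in> H1"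
  proof -
    have "ereal (infdist y H2) \<le> hausd H1 H2"
      unfolding hausd_def using that by (intro order_trans[OF SUP_upper max.cobounded1]) auto
    also have "\<dots> < ereal e"
      by (rule assms)
    finally show ?thesis
      by simp
  qed
  show "infdist y H1 < e" if "y \<in> H2"
  proof -
    have "ereal (infdist y H1) \<le> hausd H1 H2"
      unfolding hausd_def using that by (intro order_trans[OF SUP_upper max.cobounded2]) auto
    also have "\<dots> < ereal e"
      by (rule assms)
    finally show ?thesis
      by simp
  qed
qed

lemma infdist_le_infdist_add:
  assumes "H' \<noteq> {}" "\<And>h. h \<in> H' \<Longrightarrow> infdist h H < e"
  shows "infdist y H \<le> infdist y H' + e"
proof -
  have "infdist y H - e \<le> dist y h" if "h \<in> H'" for h
    using infdist_triangle[of y H h] assms(2)[OF that] by simp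
  then have "infdist y H - e \<le> infdist y H'"
    unfolding infdist_notempty[OF assms(1)] by (intro cINF_greatest assms(1))
  then show ?thesis by simp
qed

lemma abs_infdist_diff_le_hausd:
  assumes "H \<noteq> {}" "H' \<noteq> {}" "hausd H H' < ereal e"
  shows "\<bar>infdist y H - infdist y' H'\<bar> \<le> e + dist y y'"
proof -
  have "infdist y H \<le> infdist y H' + e"
    using assms(2) infdist_lt_if_hausd_less(2)[OF assms(3)] by (rule infdist_le_infdist_add)
  moreover have "infdist y H' \<le> infdist y H + e"
    using assms(1) infdist_lt_if_hausd_less(1)[OF assms(3)] by (rule infdist_le_infdist_add)
  moreover have "\<bar>infdist y H' - infdist y' H'\<bar> \<le> dist y y'"
    by (rule infdist_triangle_abs)
  ultimately show ?thesis by linarith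
qed

definition near_closest_Nash :: "('n \<Rightarrow> (nat \<Rightarrow> real) set)
    \<Rightarrow> (real \<Rightarrow> real^'d \<Rightarrow> ('n::finite \<Rightarrow> nat \<Rightarrow> real) \<Rightarrow> real^'d)
    \<Rightarrow> (real \<Rightarrow> real^'d \<Rightarrow> ('n \<Rightarrow> nat \<Rightarrow> real) \<Rightarrow> real^'n)
    \<Rightarrow> real \<Rightarrow> real \<Rightarrow> real \<times> (real^'d) \<times> (real^'d^'n) \<Rightarrow> real^'n \<Rightarrow> ('n \<Rightarrow> nat \<Rightarrow> real) \<Rightarrow> bool" where
  "near_closest_Nash A b f \<epsilon> \<delta> \<theta> y a \<longleftrightarrow> a \<in> NashEps A b f \<epsilon> \<theta> \<and>
     \<bar>norm (y - hvec b f \<theta> a) - infdist y (HH A b f \<theta>)\<bar> \<le> \<delta>"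

lemma exists_near_closest_Nash:
  assumes "HH A b f \<theta> \<noteq> {}" "\<kappa> > 0"
  shows "\<exists>a\<in>NashEps A b f \<kappa> \<theta>. \<bar>norm (y - hvec b f \<theta> a) - infdist y (HH A b f \<theta>)\<bar> < 2 * \<kappa>"
proof -
  let ?H = "HH A b f \<theta>"
  have "(INF h\<in>?H. dist y h) < infdist y ?H + \<kappa>"
    using assms by (simp add: infdist_notempty)
  then obtain ys where ys: "ys \<in> ?H" "dist y ys < infdist y ?H + \<kappa>"
    using cINF_less_iff[of ?H "dist y"] assms(1) by (auto intro: bdd_belowI2[of _ 0])
  then have "ys \<in> HHeps A b f \<kappa> \<theta>"
    using assms(2) unfolding HH_def by auto
  then obtain a where a: "a \<in> NashEps A b f \<kappa> \<theta>" and "dist ys (hvec b f \<theta> a) < \<kappa>"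
    unfolding HHeps_def by (auto simp: dist_norm)
  moreover have "infdist y ?H \<le> dist y ys"
    using ys(1) by (rule infdist_le)
  ultimately have "\<bar>dist y (hvec b f \<theta> a) - infdist y ?H\<bar> < 2 * \<kappa>"
    using ys(2) dist_triangle[of y "hvec b f \<theta> a" ys] dist_triangle[of y ys "hvec b f \<theta> a"]
    by (simp add: dist_commute abs_less_iff)
  with a show ?thesis
    by (auto simp: dist_norm)
qed

lemma near_closest_Nash_perturb:
  fixes b :: "real \<Rightarrow> real^'d \<Rightarrow> ('n::finite \<Rightarrow> nat \<Rightarrow> real) \<Rightarrow> real^'d"
  assumes a: "a \<in> NashEps A b f \<kappa> (t0, x0, z0)"
    and a_near: "\<bar>norm (y0 - hvec b f (t0, x0, z0) a) - infdist y0 (HH A b f (t0, x0, z0))\<bar> < 2 * \<kappa>"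
    and hh_close: "\<forall>a'\<in>profiles A. \<forall>i. \<bar>hh b f i t x (z$i) a' - hh b f i t0 x0 (z0$i) a'\<bar> < \<kappa>"
    and H_ne: "HH A b f (t, x, z) \<noteq> {}" "HH A b f (t0, x0, z0) \<noteq> {}"
    and H_close: "hausd (HH A b f (t, x, z)) (HH A b f (t0, x0, z0)) < ereal \<kappa>"
    and \<kappa>_\<epsilon>: "3 * \<kappa> \<le> \<epsilon>"
    and \<kappa>_\<delta>: "3 * \<kappa> + real CARD('n) * \<kappa> + 2 * dist y y0 \<le> \<delta>"
  shows "near_closest_Nash A b f \<epsilon> \<delta> (t, x, z) y a"
proof -
  define h h0 where "h = hvec b f (t, x, z) a" and "h0 = hvec b f (t0, x0, z0) a"
  have "a \<in> profiles A"
    using a by (simp add: NashEps_def)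
  then have "norm (h - h0) \<le> real CARD('n) * \<kappa>"
    unfolding h_def h0_def using hh_close by (intro norm_hvec_diff_le) blast
  moreover have "\<bar>norm (y - h) - norm (y0 - h0)\<bar> \<le> norm ((y - y0) - (h - h0))"
    using norm_triangle_ineq3[of "y - h" "y0 - h0"] by (simp add: algebra_simps)
  moreover have "norm ((y - y0) - (h - h0)) \<le> dist y y0 + norm (h - h0)"
    using norm_triangle_ineq4[of "y - y0" "h - h0"] by (simp add: dist_norm)
  moreover have "\<bar>infdist y (HH A b f (t, x, z)) - infdist y0 (HH A b f (t0, x0, z0))\<bar> \<le> \<kappa> + dist y y0"
    using H_ne H_close by (rule abs_infdist_diff_le_hausd)
  ultimately have "\<bar>norm (y - h) - infdist y (HH A b f (t, x, z))\<bar> \<le> \<delta>"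
    using a_near \<kappa>_\<delta> unfolding h0_def abs_le_iff abs_less_iff by linarith
  moreover have "a \<in> NashEps A b f \<epsilon> (t, x, z)"
    using NashEps_perturb[OF a hh_close] \<kappa>_\<epsilon> by simp
  ultimately show ?thesis
    unfolding near_closest_Nash_def h_def by blast
qed

lemma locally_constant_near_closest_Nash:
  fixes b :: "real \<Rightarrow> real^'d \<Rightarrow> ('n::finite \<Rightarrow> nat \<Rightarrow> real) \<Rightarrow> real^'d"
    and f :: "real \<Rightarrow> real^'d \<Rightarrow> ('n \<Rightarrow> nat \<Rightarrow> real) \<Rightarrow> real^'n"
    and z0 :: "real^'d^'n" and y0 :: "real^'n"
  assumes b_bdd: "\<exists>C. \<forall>t\<in>{0..T}. \<forall>x. \<forall>a\<in>profiles A. norm (b t x a) \<le> C"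
    and b_eq: "uniformly_equicontinuous_in_state T A b"
    and f_eq: "uniformly_equicontinuous_in_state T A f"
    and H_ne: "\<forall>\<theta>\<in>{0..T} \<times> UNIV. HH A b f \<theta> \<noteq> {}"
    and H_cont: "\<forall>\<theta>\<in>{0..T} \<times> UNIV. \<forall>e>0. \<exists>\<delta>>0. \<forall>\<theta>'\<in>{0..T} \<times> UNIV.
        dist \<theta>' \<theta> < \<delta> \<longrightarrow> hausd (HH A b f \<theta>') (HH A b f \<theta>) < ereal e"
    and \<epsilon>: "\<epsilon> > 0" and \<delta>: "\<delta> > 0" and t0: "t0 \<in> {0..T}"
  shows "\<exists>r>0. \<exists>a. \<forall>t x z y. t \<in> {0..T} \<longrightarrow> dist ((t, x, z), y) ((t0, x0, z0), y0) < r \<longrightarrow>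
     near_closest_Nash A b f \<epsilon> \<delta> (t, x, z) y a"
proof -
  define c where "c = real CARD('n)"
  define \<kappa> where "\<kappa> = min \<epsilon> \<delta> / (6 + 2 * c)"
  have "c \<ge> 0" "\<kappa> > 0"
    using \<epsilon> \<delta> by (simp_all add: c_def \<kappa>_def)
  have "\<kappa> * (6 + 2 * c) = min \<epsilon> \<delta>"
    using \<open>c \<ge> 0\<close> by (simp add: \<kappa>_def)
  then have "6 * \<kappa> + 2 * (c * \<kappa>) = min \<epsilon> \<delta>"
    by (simp add: algebra_simps)
  moreover have "0 \<le> c * \<kappa>" "min \<epsilon> \<delta> \<le> \<epsilon>" "min \<epsilon> \<delta> \<le> \<delta>"
    using \<open>c \<ge> 0\<close> \<open>\<kappa> > 0\<close> by simp_all
  ultimately have \<kappa>_\<epsilon>: "3 * \<kappa> \<le> \<epsilon>" and \<kappa>_\<delta>: "3 * \<kappa> + c * \<kappa> \<le> \<delta> / 2"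
    using \<open>\<kappa> > 0\<close> by linarith+
  let ?\<theta>0 = "(t0, x0, z0)"
  have "HH A b f ?\<theta>0 \<noteq> {}"
    using H_ne t0 by auto
  then obtain a where a: "a \<in> NashEps A b f \<kappa> ?\<theta>0"
    and a_near: "\<bar>norm (y0 - hvec b f ?\<theta>0 a) - infdist y0 (HH A b f ?\<theta>0)\<bar> < 2 * \<kappa>"
    using exists_near_closest_Nash \<open>\<kappa> > 0\<close> by blast
  obtain r1 where "r1 > 0" and r1: "\<forall>t x z. t \<in> {0..T} \<longrightarrow> dist (t, x, z) ?\<theta>0 < r1 \<longrightarrow>
      (\<forall>a'\<in>profiles A. \<forall>i. \<bar>hh b f i t x (z$i) a' - hh b f i t0 x0 (z0$i) a'\<bar> < \<kappa>)"
    using hh_equicontinuous_at[OF b_bdd b_eq f_eq t0 \<open>\<kappa> > 0\<close>] by blast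
  obtain r2 where "r2 > 0" and r2: "\<forall>\<theta>'\<in>{0..T} \<times> UNIV. dist \<theta>' ?\<theta>0 < r2 \<longrightarrow>
      hausd (HH A b f \<theta>') (HH A b f ?\<theta>0) < ereal \<kappa>"
    using H_cont[rule_format, of ?\<theta>0 \<kappa>] t0 \<open>\<kappa> > 0\<close> by auto
  define r where "r = min (min r1 r2) (\<delta> / 4)"
  have "near_closest_Nash A b f \<epsilon> \<delta> (t, x, z) y a"
    if t: "t \<in> {0..T}" and close: "dist ((t, x, z), y) (?\<theta>0, y0) < r" for t x z y
  proof -
    have "dist (t, x, z) ?\<theta>0 < r" "dist y y0 < r"
      using close dist_fst_le[of "((t, x, z), y)" "(?\<theta>0, y0)"] dist_snd_le[of "((t, x, z), y)" "(?\<theta>0, y0)"]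
      by simp_all
    then have "dist (t, x, z) ?\<theta>0 < r1" "dist (t, x, z) ?\<theta>0 < r2" "dist y y0 < \<delta> / 4"
      by (simp_all add: r_def)
    have hh_close: "\<forall>a'\<in>profiles A. \<forall>i. \<bar>hh b f i t x (z$i) a' - hh b f i t0 x0 (z0$i) a'\<bar> < \<kappa>"
      using r1 t \<open>dist (t, x, z) ?\<theta>0 < r1\<close> by blast
    have "(t, x, z) \<in> {0..T} \<times> UNIV"
      using t by simp
    then have "HH A b f (t, x, z) \<noteq> {}" "hausd (HH A b f (t, x, z)) (HH A b f ?\<theta>0) < ereal \<kappa>"
      using H_ne r2 \<open>dist (t, x, z) ?\<theta>0 < r2\<close> by blast+
    moreover have "3 * \<kappa> + real CARD('n) * \<kappa> + 2 * dist y y0 \<le> \<delta>"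
      using \<kappa>_\<delta> \<open>dist y y0 < \<delta> / 4\<close> unfolding c_def by linarith
    ultimately show ?thesis
      using near_closest_Nash_perturb[OF a a_near hh_close _ \<open>HH A b f ?\<theta>0 \<noteq> {}\<close> _ \<kappa>_\<epsilon>] by blast
  qed
  moreover have "r > 0"
    using \<open>r1 > 0\<close> \<open>r2 > 0\<close> \<delta> by (simp add: r_def)
  ultimately show ?thesis
    by (intro exI[of _ r] exI[of _ a] conjI allI impI)
qed

lemma borel_near_closest_Nash_selector:
  fixes b :: "real \<Rightarrow> real^'d \<Rightarrow> ('n::finite \<Rightarrow> nat \<Rightarrow> real) \<Rightarrow> real^'d"
    and f :: "real \<Rightarrow> real^'d \<Rightarrow> ('n \<Rightarrow> nat \<Rightarrow> real) \<Rightarrow> real^'n"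
  assumes b_bdd: "\<exists>C. \<forall>t\<in>{0..T}. \<forall>x. \<forall>a\<in>profiles A. norm (b t x a) \<le> C"
    and b_eq: "uniformly_equicontinuous_in_state T A b"
    and f_eq: "uniformly_equicontinuous_in_state T A f"
    and H_ne: "\<forall>\<theta>\<in>{0..T} \<times> UNIV. HH A b f \<theta> \<noteq> {}"
    and H_cont: "\<forall>\<theta>\<in>{0..T} \<times> UNIV. \<forall>e>0. \<exists>\<delta>>0. \<forall>\<theta>'\<in>{0..T} \<times> UNIV.
        dist \<theta>' \<theta> < \<delta> \<longrightarrow> hausd (HH A b f \<theta>') (HH A b f \<theta>) < ereal e"
    and \<epsilon>: "\<epsilon> > 0" and \<delta>: "\<delta> > 0"
  shows "\<exists>\<phi>\<in>borel_measurable borel. \<forall>t x z y. t \<in> {0..T} \<longrightarrow>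
     near_closest_Nash A b f \<epsilon> \<delta> (t, x, z) y (\<phi> ((t, x, z), y))"
proof -
  let ?P = "{p :: (real \<times> (real^'d) \<times> (real^'d^'n)) \<times> (real^'n). fst (fst p) \<in> {0..T}}"
  have "\<exists>r>0. \<exists>a. \<forall>p\<in>?P. dist p p0 < r \<longrightarrow> near_closest_Nash A b f \<epsilon> \<delta> (fst p) (snd p) a"
    if "p0 \<in> ?P" for p0
  proof -
    obtain t0 x0 z0 y0 where p0: "p0 = ((t0, x0, z0), y0)"
      by (metis prod.collapse)
    then have "t0 \<in> {0..T}"
      using that by simp
    from locally_constant_near_closest_Nash[OF assms this]
    obtain r a where "r > 0" and a: "\<forall>t x z y. t \<in> {0..T} \<longrightarrow> dist ((t, x, z), y) p0 < r \<longrightarrow>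
        near_closest_Nash A b f \<epsilon> \<delta> (t, x, z) y a"
      unfolding p0 by blast
    have "near_closest_Nash A b f \<epsilon> \<delta> (fst p) (snd p) a" if "p \<in> ?P" "dist p p0 < r" for p
    proof -
      obtain t x z y where "p = ((t, x, z), y)"
        by (metis prod.collapse)
      then show ?thesis
        using a that by simp
    qed
    with \<open>r > 0\<close> show ?thesis by blast
  qed
  then obtain \<phi> where "\<phi> \<in> borel_measurable borel"
    and \<phi>: "\<forall>p\<in>?P. near_closest_Nash A b f \<epsilon> \<delta> (fst p) (snd p) (\<phi> p)"
    using borel_measurable_local_choice[where good="\<lambda>p. near_closest_Nash A b f \<epsilon> \<delta> (fst p) (snd p)"]
    by meson
  have "near_closest_Nash A b f \<epsilon> \<delta> (t, x, z) y (\<phi> ((t, x, z), y))" if "t \<in> {0..T}" for t x z y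
    using \<phi> that by simp
  with \<open>\<phi> \<in> borel_measurable borel\<close> show ?thesis
    by blast
qed

lemma (in prob_space) nn_integral_interval_le_const:
  assumes "\<And>t \<omega>. t \<in> {0..T} \<Longrightarrow> F t \<omega> \<le> c" "c \<ge> 0" "T \<ge> 0"
  shows "(\<integral>\<^sup>+\<omega>. (\<integral>\<^sup>+t\<in>{0..T}. ennreal (F t \<omega>) \<partial>lborel) \<partial>M) \<le> ennreal (c * T)"
proof -
  have "(\<integral>\<^sup>+t\<in>{0..T}. ennreal (F t \<omega>) \<partial>lborel) \<le> (\<integral>\<^sup>+t. ennreal c * indicator {0..T} t \<partial>lborel)" for \<omega>
    using assms(1) by (intro nn_integral_mono) (auto simp: indicator_def intro: ennreal_leI)
  also have "\<dots> = ennreal (c * T)"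
    using assms(2,3) by (simp add: nn_integral_cmult_indicator ennreal_mult)
  finally have "(\<integral>\<^sup>+\<omega>. (\<integral>\<^sup>+t\<in>{0..T}. ennreal (F t \<omega>) \<partial>lborel) \<partial>M) \<le> (\<integral>\<^sup>+\<omega>. ennreal (c * T) \<partial>M)"
    by (intro nn_integral_mono)
  also have "\<dots> = ennreal (c * T)"
    by (simp add: emeasure_space_1)
  finally show ?thesis .
qed

theorem proposition3p2:
  fixes M :: "'w measure" and T :: real
    and B :: "real \<Rightarrow> 'w \<Rightarrow> real^'d"
    and m :: "'n::finite \<Rightarrow> nat" and A :: "'n \<Rightarrow> (nat \<Rightarrow> real) set"
    and b :: "real \<Rightarrow> real^'d \<Rightarrow> ('n \<Rightarrow> nat \<Rightarrow> real) \<Rightarrow> real^'d"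
    and f :: "real \<Rightarrow> real^'d \<Rightarrow> ('n \<Rightarrow> nat \<Rightarrow> real) \<Rightarrow> real^'n"
    and g :: "real^'d \<Rightarrow> real^'n"
    and \<eta> :: "real \<Rightarrow> 'w \<Rightarrow> real^'n"
    and Z :: "real \<Rightarrow> 'w \<Rightarrow> real^'d^'n"
    and \<epsilon> :: real
  assumes prob: "prob_space M"
    and T_pos: "T > 0"
    and BM: "std_brownian M T B"
    and dom: "\<And>i. is_domain_in (m i) (A i)"
    and b_bdd: "\<exists>C. \<forall>t\<in>{0..T}. \<forall>x. \<forall>a\<in>profiles A. norm (b t x a) \<le> C"
    and f_bdd: "\<exists>C. \<forall>t\<in>{0..T}. \<forall>x. \<forall>a\<in>profiles A. norm (f t x a) \<le> C"
    and g_bdd: "bounded (range g)"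
    and b_uc: "\<forall>e>0. \<exists>\<delta>>0. \<forall>t\<in>{0..T}. \<forall>t'\<in>{0..T}. \<forall>x x'. \<forall>a\<in>profiles A. \<forall>a'\<in>profiles A.
        \<bar>t - t'\<bar> < \<delta> \<and> dist x x' < \<delta> \<and> (\<forall>i j. \<bar>a i j - a' i j\<bar> < \<delta>)
        \<longrightarrow> dist (b t x a) (b t' x' a') < e"
    and f_uc: "\<forall>e>0. \<exists>\<delta>>0. \<forall>t\<in>{0..T}. \<forall>t'\<in>{0..T}. \<forall>x x'. \<forall>a\<in>profiles A. \<forall>a'\<in>profiles A.
        \<bar>t - t'\<bar> < \<delta> \<and> dist x x' < \<delta> \<and> (\<forall>i j. \<bar>a i j - a' i j\<bar> < \<delta>)
        \<longrightarrow> dist (f t x a) (f t' x' a') < e"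
    and g_uc: "uniformly_continuous_on UNIV g"
    and H_ne: "\<forall>\<theta>\<in>{0..T} \<times> UNIV. HH A b f \<theta> \<noteq> {}"
    and H_cont: "\<forall>\<theta>\<in>{0..T} \<times> UNIV. \<forall>e>0. \<exists>\<delta>>0. \<forall>\<theta>'\<in>{0..T} \<times> UNIV.
        dist \<theta>' \<theta> < \<delta> \<longrightarrow> hausd (HH A b f \<theta>') (HH A b f \<theta>) < ereal e"
    and eta: "L2proc M (natfilt M T B) T \<eta>"
    and Zin: "L2proc M (natfilt M T B) T Z"
    and eps: "\<epsilon> > 0"
  shows "\<exists>\<alpha> :: real \<Rightarrow> 'w \<Rightarrow> ('n \<Rightarrow> nat \<Rightarrow> real). \<exists>Z\<epsilon> :: real \<Rightarrow> 'w \<Rightarrow> real^'d^'n.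
     progressive (natfilt M T B) T \<alpha>
   \<and> (\<forall>t\<in>{0..T}. \<forall>\<omega>\<in>space M. \<alpha> t \<omega> \<in> profiles A)
   \<and> L2proc M (natfilt M T B) T Z\<epsilon>
   \<and> (\<forall>t\<in>{0..T}. \<forall>\<omega>\<in>space M. \<alpha> t \<omega> \<in> NashEps A b f \<epsilon> (t, B t \<omega>, Z\<epsilon> t \<omega>))
   \<and> (\<integral>\<^sup>+\<omega>. (\<integral>\<^sup>+t\<in>{0..T}. ennreal ((norm (Z\<epsilon> t \<omega> - Z t \<omega>))\<^sup>2) \<partial>lborel) \<partial>M) \<le> ennreal \<epsilon>
   \<and> (\<integral>\<^sup>+\<omega>. (\<integral>\<^sup>+t\<in>{0..T}. ennreal ((\<bar>norm (\<eta> t \<omega> - hvec b f (t, B t \<omega>, Z t \<omega>) (\<alpha> t \<omega>))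
          - infdist (\<eta> t \<omega>) (HH A b f (t, B t \<omega>, Z t \<omega>))\<bar>)\<^sup>2) \<partial>lborel) \<partial>M) \<le> ennreal \<epsilon>"
proof -
  interpret prob_space M
    by (rule prob)
  define \<delta> where "\<delta> = sqrt (\<epsilon> / T)"
  have "\<delta> > 0" and \<delta>_sq: "\<delta>\<^sup>2 * T = \<epsilon>"
    using eps T_pos by (simp_all add: \<delta>_def)
  obtain \<phi> where "\<phi> \<in> borel_measurable borel" and \<phi>: "\<forall>t x z y. t \<in> {0..T} \<longrightarrow>
      near_closest_Nash A b f \<epsilon> \<delta> (t, x, z) y (\<phi> ((t, x, z), y))"
    using borel_near_closest_Nash_selector[OF b_bdd uniformly_equicontinuous_in_stateI[OF b_uc]
        uniformly_equicontinuous_in_stateI[OF f_uc] H_ne H_cont eps \<open>\<delta> > 0\<close>]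
    by blast
  define \<alpha> where "\<alpha> t \<omega> = \<phi> ((t, B t \<omega>, Z t \<omega>), \<eta> t \<omega>)" for t \<omega>
  have \<alpha>: "near_closest_Nash A b f \<epsilon> \<delta> (t, B t \<omega>, Z t \<omega>) (\<eta> t \<omega>) (\<alpha> t \<omega>)"
    if "t \<in> {0..T}" for t \<omega>
    using \<phi> that by (simp add: \<alpha>_def)
  have "(\<bar>norm (\<eta> t \<omega> - hvec b f (t, B t \<omega>, Z t \<omega>) (\<alpha> t \<omega>))
          - infdist (\<eta> t \<omega>) (HH A b f (t, B t \<omega>, Z t \<omega>))\<bar>)\<^sup>2 \<le> \<delta>\<^sup>2"
    if "t \<in> {0..T}" for t \<omega>
    using \<alpha>[OF that] by (intro power_mono) (simp_all add: near_closest_Nash_def)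
  then have bound: "(\<integral>\<^sup>+\<omega>. (\<integral>\<^sup>+t\<in>{0..T}. ennreal ((\<bar>norm (\<eta> t \<omega> - hvec b f (t, B t \<omega>, Z t \<omega>) (\<alpha> t \<omega>))
          - infdist (\<eta> t \<omega>) (HH A b f (t, B t \<omega>, Z t \<omega>))\<bar>)\<^sup>2) \<partial>lborel) \<partial>M) \<le> ennreal \<epsilon>"
    using nn_integral_interval_le_const[of T _ "\<delta>\<^sup>2"] T_pos \<delta>_sq by simp
  have "progressive (natfilt M T B) T \<alpha>"
    unfolding \<alpha>_def using BM Zin eta unfolding std_brownian_def L2proc_def
    by (intro progressive_borel_compose[OF _ \<open>\<phi> \<in> borel_measurable borel\<close>] progressive_Pair
        progressive_time progressive_natfilt_if_continuous) auto
  with \<alpha> bound Zin show ?thesis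
    by (intro exI[of _ \<alpha>] exI[of _ Z]) (auto simp: near_closest_Nash_def NashEps_def)
qed

end
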